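(* Let $\bm{\gamma}$ be a model such that $\bm{X}_{\bm{\gamma}}$ has full column rank, and let $\tilde{\bm{\gamma}}\subseteq\bm{\gamma}^*$ with $\tilde{\bm{\gamma}}\not\subseteq\bm{\gamma}$. Then $$\mu(\bm{\gamma}\cup\tilde{\bm{\gamma}},\bm{\gamma})\ge n\,\phi^{-1}\rho(\bm{X})\sum_{b=1}^B|\tilde{\bm{\gamma}}_b\setminus\bm{\gamma}_b|\min_{i\in\tilde{\bm{\gamma}}_b\setminus\bm{\gamma}_b}(\theta^*_i)^2,$$ where terms with $\tilde{\bm{\gamma}}_b\setminus\bm{\gamma}_b=\emptyset$ are zero.
   Context: $\bm{X}\in\mathbb{R}^{n\times p}$, $\bm{\theta}^*\in\mathbb{R}^p$, $\phi>0$, true support $\bm{\gamma}^*=\{j:\theta^*_j\ne0\}$; each index $j$ has a block label $z_j\in\{1,\ldots,B\}$ and for an index set $\bm{\gamma}$, $\bm{\gamma}_b=\{j\in\bm{\gamma}:z_j=b\}$. $\bm{X}_{\bm{\gamma}}$ denotes the columns indexed by $\bm{\gamma}$, $\bm{\theta}^*_{\bm{\gamma}}$ the corresponding entries, $P_{\bm{\gamma}}=\bm{X}_{\bm{\gamma}}(\bm{X}_{\bm{\gamma}}^T\bm{X}_{\bm{\gamma}})^{-1}\bm{X}_{\bm{\gamma}}^T$. For models $\bm{\gamma},\tilde{\bm{\gamma}}$: $\mu(\bm{\gamma},\tilde{\bm{\gamma}})=\phi^{-1}\|(I_n-P_{\tilde{\bm{\gamma}}})\bm{X}_{\bm{\gamma}\setminus\tilde{\bm{\gamma}}}\bm{\theta}^*_{\bm{\gamma}\setminus\tilde{\bm{\gamma}}}\|^2$.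 $\rho(\bm{X})=\min_{\bm{\gamma}:\bm{\gamma}\not\supseteq\bm{\gamma}^*}\lambda_{\min}\big(\tfrac1n\bm{X}_{\bm{\gamma}^*\setminus\bm{\gamma}}^T(I-P_{\bm{\gamma}})\bm{X}_{\bm{\gamma}^*\setminus\bm{\gamma}}\big)$, minimum over the considered models (those with $\bm{X}_{\bm{\gamma}}$ of full column rank), which include $\bm{\gamma}$. *)

theory Defs
  imports "Jordan_Normal_Form.DL_Rank" "Jordan_Normal_Form.DL_Submatrix"
          "Jordan_Normal_Form.Gauss_Jordan_Elimination" "Jordan_Normal_Form.Char_Poly"
begin

text \<open>Design matrix X is an n x p real matrix (dim_row X = n, dim_col X = p);
  column/coordinate indices are 0..p-1.  Models are sets of column indices.\<close>

definition colsub :: "real mat \<Rightarrow> nat set \<Rightarrow> real mat" where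
  "colsub X g = submatrix X UNIV g"

definition vsub :: "real vec \<Rightarrow> nat set \<Rightarrow> real vec" where
  "vsub v g = vec (card {j. j < dim_vec v \<and> j \<in> g}) (\<lambda>i. v $ pick g i)"

definition full_col_rank :: "real mat \<Rightarrow> nat set \<Rightarrow> bool" where
  "full_col_rank X g = (vec_space.rank (dim_row X) (colsub X g) = dim_col (colsub X g))"

definition proj :: "real mat \<Rightarrow> nat set \<Rightarrow> real mat" where
  "proj X g = (let A = colsub X g in A * the (mat_inverse (A\<^sup>T * A)) * A\<^sup>T)"

definition sqnorm :: "real vec \<Rightarrow> real" where
  "sqnorm v = v \<bullet> v"

definition mu :: "real mat \<Rightarrow> real vec \<Rightarrow> real \<Rightarrow> nat set \<Rightarrow> nat set \<Rightarrow> real" where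
  "mu X \<theta> \<phi> g g' = (1 / \<phi>) * sqnorm ((1\<^sub>m (dim_row X) - proj X g') *\<^sub>v
      (colsub X (g - g') *\<^sub>v vsub \<theta> (g - g')))"

definition supp :: "real vec \<Rightarrow> nat set" where
  "supp \<theta> = {j. j < dim_vec \<theta> \<and> \<theta> $ j \<noteq> 0}"

definition lambda_min :: "real mat \<Rightarrow> real" where
  "lambda_min A = Min {k. eigenvalue A k}"

definition rho :: "real mat \<Rightarrow> real vec \<Rightarrow> nat set set \<Rightarrow> real" where
  "rho X \<theta> M = Min {lambda_min ((1 / real (dim_row X)) \<cdot>\<^sub>m
        ((colsub X (supp \<theta> - g))\<^sup>T * (1\<^sub>m (dim_row X) - proj X g) * colsub X (supp \<theta> - g)))
      | g. g \<in> M \<and> \<not> supp \<theta> \<subseteq> g}"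

definition blk :: "(nat \<Rightarrow> nat) \<Rightarrow> nat set \<Rightarrow> nat \<Rightarrow> nat set" where
  "blk z g b = {j \<in> g. z j = b}"

end

theory Submission
  imports Defs
begin

text \<open>Let \<open>D = \<gamma>t - \<gamma>\<close> and \<open>S = \<gamma>* - \<gamma>\<close>, and let \<open>v\<close> be \<open>\<theta>*\<close> restricted to \<open>D\<close> and read
  on the coordinates \<open>S \<supseteq> D\<close>, so that \<open>X\<^sub>D \<theta>*\<^sub>D = X\<^sub>S v\<close>. Since \<open>I - P\<^sub>\<gamma>\<close> is a symmetric
  idempotent, \<open>\<mu>(\<gamma> \<union> \<gamma>t, \<gamma>) = n \<phi>\<^sup>-\<^sup>1 v\<^sup>T A v\<close> with \<open>A = n\<^sup>-\<^sup>1 X\<^sub>S\<^sup>T (I - P\<^sub>\<gamma>) X\<^sub>S\<close>, the matrix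
  whose smallest eigenvalue enters \<open>\<rho>(X)\<close> at the model \<open>\<gamma>\<close>. Hence
  \<open>v\<^sup>T A v \<ge> \<lambda>_min(A) |v|\<^sup>2 \<ge> \<rho>(X) |v|\<^sup>2\<close>, and \<open>|v|\<^sup>2\<close>, the sum of \<open>\<theta>*\<^sub>j\<^sup>2\<close> over \<open>j \<in> D\<close>,
  dominates the block sum of the statement.

  The Rayleigh bound \<open>\<lambda>_min(A) |x|\<^sup>2 \<le> x\<^sup>T A x\<close> for symmetric \<open>A\<close> is proved variationally:
  the infimum \<open>m\<close> of the Rayleigh quotient makes \<open>A - m I\<close> positive semidefinite but not
  coercive, hence singular, so \<open>m\<close> is an eigenvalue.\<close>

section \<open>Quadratic forms\<close>

lemma scalar_prod_self_nonneg: "0 \<le> (x :: real vec) \<bullet> x"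
  using conjugate_square_ge_0_vec[of x] by simp

lemma scalar_prod_self_eq_0_iff:
  "(x :: real vec) \<in> carrier_vec k \<Longrightarrow> x \<bullet> x = 0 \<longleftrightarrow> x = 0\<^sub>v k"
  using conjugate_square_eq_0_vec[of x k] by simp

lemma abs_mult_index_le_scalar_prod_self:
  fixes x :: "real vec"
  assumes "i < dim_vec x" "j < dim_vec x"
  shows "\<bar>x $ i * x $ j\<bar> \<le> x \<bullet> x"
proof -
  have sq_le: "(x $ l)\<^sup>2 \<le> x \<bullet> x" if "l < dim_vec x" for l
  proof -
    have "(x $ l)\<^sup>2 \<le> (\<Sum>m\<in>{0..<dim_vec x}. (x $ m)\<^sup>2)"
      by (rule member_le_sum) (use that in auto)
    then show ?thesis by (simp add: scalar_prod_def power2_eq_square)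
  qed
  have "\<bar>x $ i * x $ j\<bar> \<le> ((x $ i)\<^sup>2 + (x $ j)\<^sup>2) / 2"
    using sum_squares_bound[of "\<bar>x $ i\<bar>" "\<bar>x $ j\<bar>"] by (simp add: abs_mult)
  with sq_le[OF assms(1)] sq_le[OF assms(2)] show ?thesis by argo
qed

lemma quadratic_form_bounded:
  fixes A :: "real mat"
  assumes A: "A \<in> carrier_mat k k"
  obtains C where "C > 0" "\<And>x. x \<in> carrier_vec k \<Longrightarrow> \<bar>x \<bullet> (A *\<^sub>v x)\<bar> \<le> C * (x \<bullet> x)"
proof
  let ?C = "1 + (\<Sum>i<k. \<Sum>j<k. \<bar>A $$ (i, j)\<bar>)"
  show "0 < ?C" by (simp add: add_pos_nonneg sum_nonneg)
  fix x :: "real vec" assume x: "x \<in> carrier_vec k"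
  have "x \<bullet> (A *\<^sub>v x) = (\<Sum>i<k. \<Sum>j<k. A $$ (i, j) * (x $ i * x $ j))"
    using A x unfolding scalar_prod_def mult_mat_vec_def
    by (auto simp: sum_distrib_left row_def lessThan_atLeast0 intro!: sum.cong)
  also have "\<bar>\<dots>\<bar> \<le> (\<Sum>i<k. \<Sum>j<k. \<bar>A $$ (i, j)\<bar> * \<bar>x $ i * x $ j\<bar>)"
    unfolding abs_mult[symmetric] by (rule order_trans[OF sum_abs]) (intro sum_mono sum_abs)
  also have "\<dots> \<le> (\<Sum>i<k. \<Sum>j<k. \<bar>A $$ (i, j)\<bar> * (x \<bullet> x))"
    using x abs_mult_index_le_scalar_prod_self[of _ x]
    by (intro sum_mono mult_left_mono) auto
  also have "\<dots> \<le> ?C * (x \<bullet> x)"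
    using scalar_prod_self_nonneg[of x] by (simp add: sum_distrib_right distrib_right)
  finally show "\<bar>x \<bullet> (A *\<^sub>v x)\<bar> \<le> ?C * (x \<bullet> x)" .
qed

lemma quadratic_form_congruence:
  fixes A B :: "real mat"
  assumes A: "A \<in> carrier_mat n k" and B: "B \<in> carrier_mat n n" and x: "x \<in> carrier_vec k"
  shows "x \<bullet> ((A\<^sup>T * B * A) *\<^sub>v x) = (A *\<^sub>v x) \<bullet> (B *\<^sub>v (A *\<^sub>v x))"
proof -
  have "(A\<^sup>T * B * A) *\<^sub>v x = (A\<^sup>T * B) *\<^sub>v (A *\<^sub>v x)"
    by (rule assoc_mult_mat_vec) (use A B x in auto)
  also have "\<dots> = A\<^sup>T *\<^sub>v (B *\<^sub>v (A *\<^sub>v x))"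
    by (rule assoc_mult_mat_vec) (use A B x in auto)
  finally have "x \<bullet> ((A\<^sup>T * B * A) *\<^sub>v x) = (A\<^sup>T *\<^sub>v (B *\<^sub>v (A *\<^sub>v x))) \<bullet> x"
    using A B x by (simp add: comm_scalar_prod[of _ k])
  also have "\<dots> = (A *\<^sub>v x) \<bullet> (B *\<^sub>v (A *\<^sub>v x))"
    using transpose_vec_mult_scalar[OF A x, of "B *\<^sub>v (A *\<^sub>v x)"] A B x
    by (simp add: comm_scalar_prod[of _ n])
  finally show ?thesis .
qed

lemma transpose_congruence:
  fixes A B :: "'a :: comm_ring_1 mat"
  assumes A: "A \<in> carrier_mat n k" and B: "B \<in> carrier_mat n n" and sym: "B\<^sup>T = B"
  shows "(A\<^sup>T * B * A)\<^sup>T = A\<^sup>T * B * A"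
proof -
  have "(A\<^sup>T * B * A)\<^sup>T = A\<^sup>T * (A\<^sup>T * B)\<^sup>T"
    by (rule transpose_mult) (use A B in auto)
  also have "(A\<^sup>T * B)\<^sup>T = B * A"
    using transpose_mult[of "A\<^sup>T" k n B n] A B sym by simp
  also have "A\<^sup>T * (B * A) = A\<^sup>T * B * A"
    by (rule assoc_mult_mat[symmetric]) (use A B in auto)
  finally show ?thesis .
qed

lemma transpose_smult_mat: "(c \<cdot>\<^sub>m A)\<^sup>T = c \<cdot>\<^sub>m A\<^sup>T"
  by (intro eq_matI) auto

lemma smult_mat_mult_vec:
  fixes A :: "'a :: comm_ring mat"
  assumes "A \<in> carrier_mat nr nc" "v \<in> carrier_vec nc"
  shows "(c \<cdot>\<^sub>m A) *\<^sub>v v = c \<cdot>\<^sub>v (A *\<^sub>v v)"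
  using assms by (intro eq_vecI) (auto simp: mult_mat_vec_def smult_scalar_prod_distrib[of _ nc])

lemma symmetric_scalar_prod_mult_vec:
  fixes B :: "'a :: comm_semiring_0 mat"
  assumes "B \<in> carrier_mat k k" "B\<^sup>T = B" "x \<in> carrier_vec k" "y \<in> carrier_vec k"
  shows "x \<bullet> (B *\<^sub>v y) = (B *\<^sub>v x) \<bullet> y"
  using transpose_vec_mult_scalar[of B k k y x] assms by simp

lemma psd_sq_norm_mult_vec_le:
  fixes B :: "real mat"
  assumes B: "B \<in> carrier_mat k k" and sym: "B\<^sup>T = B"
    and psd: "\<And>w. w \<in> carrier_vec k \<Longrightarrow> 0 \<le> w \<bullet> (B *\<^sub>v w)"
    and K: "K > 0" and bound: "\<And>w. w \<in> carrier_vec k \<Longrightarrow> w \<bullet> (B *\<^sub>v w) \<le> K * (w \<bullet> w)"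
    and x: "x \<in> carrier_vec k"
  shows "(B *\<^sub>v x) \<bullet> (B *\<^sub>v x) \<le> K * (x \<bullet> (B *\<^sub>v x))"
proof -
  define y where "y = B *\<^sub>v x"
  define t where "t = 1 / K"
  have y: "y \<in> carrier_vec k" and By: "B *\<^sub>v y \<in> carrier_vec k"
    unfolding y_def using B x by auto
  have xBy: "x \<bullet> (B *\<^sub>v y) = y \<bullet> y"
    using symmetric_scalar_prod_mult_vec[OF B sym x y] by (simp add: y_def)
  have yx: "y \<bullet> x = x \<bullet> (B *\<^sub>v x)"
    using x y by (simp add: comm_scalar_prod[of _ k] y_def)
  have "0 \<le> (x - t \<cdot>\<^sub>v y) \<bullet> (B *\<^sub>v (x - t \<cdot>\<^sub>v y))"
    using psd x y by simp
  also have "\<dots> = x \<bullet> (B *\<^sub>v x) - 2 * t * (y \<bullet> y) + t\<^sup>2 * (y \<bullet> (B *\<^sub>v y))"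
    using B x y By xBy yx
    by (simp add: mult_minus_distrib_mat_vec[of _ k k] mult_mat_vec[OF B]
        minus_scalar_prod_distrib[of _ k] scalar_prod_minus_distrib[of _ k]
        comm_scalar_prod[of y k "B *\<^sub>v x"] power2_eq_square algebra_simps flip: y_def)
  also have "\<dots> \<le> x \<bullet> (B *\<^sub>v x) - 2 * t * (y \<bullet> y) + t\<^sup>2 * (K * (y \<bullet> y))"
    using bound[OF y] by (simp add: mult_left_mono)
  also have "\<dots> = x \<bullet> (B *\<^sub>v x) - (y \<bullet> y) / K"
    unfolding t_def using K by (simp add: field_simps power2_eq_square)
  finally show ?thesis using K by (simp add: y_def field_simps)
qed

lemma mat_inverse_nonsingular:
  fixes A :: "'a :: field mat"
  assumes A: "A \<in> carrier_mat k k" and det: "det A \<noteq> 0"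
  obtains Ai where "mat_inverse A = Some Ai" "A * Ai = 1\<^sub>m k" "Ai * A = 1\<^sub>m k"
    "Ai \<in> carrier_mat k k"
proof -
  have "A \<in> Units (ring_mat TYPE('a) k ())" by (rule det_non_zero_imp_unit[OF A det])
  then obtain Ai where "mat_inverse A = Some Ai"
    using mat_inverse(1)[OF A, of "()"] by (cases "mat_inverse A") auto
  with mat_inverse(2)[OF A this] that show thesis by blast
qed

lemma psd_nonsingular_coercive:
  fixes B :: "real mat"
  assumes B: "B \<in> carrier_mat k k" and sym: "B\<^sup>T = B"
    and psd: "\<And>w. w \<in> carrier_vec k \<Longrightarrow> 0 \<le> w \<bullet> (B *\<^sub>v w)"
    and det: "det B \<noteq> 0"
  obtains c where "c > 0" "\<And>x. x \<in> carrier_vec k \<Longrightarrow> c * (x \<bullet> x) \<le> x \<bullet> (B *\<^sub>v x)"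
proof -
  obtain Bi where Bi: "Bi * B = 1\<^sub>m k" "Bi \<in> carrier_mat k k"
    using mat_inverse_nonsingular[OF B det] by metis
  obtain C where C: "C > 0"
    "\<And>y. y \<in> carrier_vec k \<Longrightarrow> \<bar>y \<bullet> ((Bi\<^sup>T * 1\<^sub>m k * Bi) *\<^sub>v y)\<bar> \<le> C * (y \<bullet> y)"
    using quadratic_form_bounded[of "Bi\<^sup>T * 1\<^sub>m k * Bi" k] Bi by auto
  obtain K where K: "K > 0" "\<And>y. y \<in> carrier_vec k \<Longrightarrow> \<bar>y \<bullet> (B *\<^sub>v y)\<bar> \<le> K * (y \<bullet> y)"
    using quadratic_form_bounded[OF B] by metis
  show thesis
  proof (rule that[of "1 / (C * K)"])
    show "0 < 1 / (C * K)" using C(1) K(1) by simp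
    fix x :: "real vec" assume x: "x \<in> carrier_vec k"
    have Bx: "B *\<^sub>v x \<in> carrier_vec k" using B x by simp
    have "x = Bi *\<^sub>v (B *\<^sub>v x)"
      using Bi B x by (simp add: assoc_mult_mat_vec[symmetric, of _ k k _ k])
    then have "x \<bullet> x = (B *\<^sub>v x) \<bullet> ((Bi\<^sup>T * 1\<^sub>m k * Bi) *\<^sub>v (B *\<^sub>v x))"
      using quadratic_form_congruence[OF Bi(2) _ Bx, of "1\<^sub>m k"] Bi(2) x by simp
    also have "\<dots> \<le> C * ((B *\<^sub>v x) \<bullet> (B *\<^sub>v x))" using C(2)[OF Bx] by linarith
    also have "\<dots> \<le> C * (K * (x \<bullet> (B *\<^sub>v x)))"
      using psd_sq_norm_mult_vec_le[OF B sym psd K(1) _ x] K(2) C(1)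
      by (intro mult_left_mono) (auto dest: abs_le_D1)
    finally show "1 / (C * K) * (x \<bullet> x) \<le> x \<bullet> (B *\<^sub>v x)"
      using C(1) K(1) by (simp add: pos_divide_le_eq mult.commute mult.left_commute)
  qed
qed

section \<open>The smallest eigenvalue of a symmetric matrix\<close>

lemma char_matrix_mult_vec:
  fixes A :: "'a :: field mat"
  assumes "A \<in> carrier_mat k k" "x \<in> carrier_vec k"
  shows "char_matrix A e *\<^sub>v x = A *\<^sub>v x - e \<cdot>\<^sub>v x"
  unfolding char_matrix_def
  using assms by (intro eq_vecI) (auto simp: add_scalar_prod_distrib[of _ k])

lemma char_matrix_symmetric:
  fixes A :: "'a :: field mat"
  assumes "A \<in> carrier_mat k k" "A\<^sup>T = A"
  shows "(char_matrix A e)\<^sup>T = char_matrix A e"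
  using assms unfolding char_matrix_def
  by (simp add: transpose_add[of _ k k] transpose_smult_mat)

lemma symmetric_mat_eigenvalue_le_rayleigh:
  fixes A :: "real mat"
  assumes A: "A \<in> carrier_mat k k" and sym: "A\<^sup>T = A" and k: "0 < k"
  obtains m where "eigenvalue A m" "\<And>x. x \<in> carrier_vec k \<Longrightarrow> m * (x \<bullet> x) \<le> x \<bullet> (A *\<^sub>v x)"
proof -
  define R where "R = {x \<bullet> (A *\<^sub>v x) / (x \<bullet> x) | x. x \<in> carrier_vec k \<and> x \<noteq> 0\<^sub>v k}"
  define m where "m = Inf R"
  obtain C where C: "\<And>x. x \<in> carrier_vec k \<Longrightarrow> \<bar>x \<bullet> (A *\<^sub>v x)\<bar> \<le> C * (x \<bullet> x)"
    using quadratic_form_bounded[OF A] by metis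
  have pos: "0 < x \<bullet> x" if "x \<in> carrier_vec k" "x \<noteq> 0\<^sub>v k" for x :: "real vec"
    using scalar_prod_self_nonneg[of x] scalar_prod_self_eq_0_iff[OF that(1)] that(2) by linarith
  have "unit_vec k 0 \<noteq> (0\<^sub>v k :: real vec)"
    using k by (metis index_unit_vec(1) index_zero_vec(1) zero_neq_one)
  then have R_ne: "R \<noteq> {}" unfolding R_def by fastforce
  have bdd: "bdd_below R"
  proof (rule bdd_belowI[of _ "-C"])
    fix r assume "r \<in> R"
    then obtain x where x: "x \<in> carrier_vec k" "x \<noteq> 0\<^sub>v k" "r = x \<bullet> (A *\<^sub>v x) / (x \<bullet> x)"
      unfolding R_def by blast
    show "-C \<le> r" using C[OF x(1)] pos[OF x(1,2)] x(3) by (simp add: le_divide_eq abs_le_iff)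
  qed
  have lower: "m * (x \<bullet> x) \<le> x \<bullet> (A *\<^sub>v x)" if x: "x \<in> carrier_vec k" for x
  proof (cases "x = 0\<^sub>v k")
    case False
    then have "m \<le> x \<bullet> (A *\<^sub>v x) / (x \<bullet> x)"
      unfolding m_def R_def using x by (intro cInf_lower[OF _ bdd[unfolded R_def]]) blast
    then show ?thesis using pos[OF x False] by (simp add: le_divide_eq)
  qed (use A in simp)
  define B where "B = char_matrix A m"
  have B: "B \<in> carrier_mat k k" unfolding B_def using A by simp
  have B_form: "x \<bullet> (B *\<^sub>v x) = x \<bullet> (A *\<^sub>v x) - m * (x \<bullet> x)" if x: "x \<in> carrier_vec k" for x
    unfolding B_def char_matrix_mult_vec[OF A x] using A x by (simp add: scalar_prod_minus_distrib[of _ k])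
  have "det B = 0"
  proof (rule ccontr)
    assume "det B \<noteq> 0"
    moreover have "B\<^sup>T = B" unfolding B_def by (rule char_matrix_symmetric[OF A sym])
    moreover have "\<And>w. w \<in> carrier_vec k \<Longrightarrow> 0 \<le> w \<bullet> (B *\<^sub>v w)"
      using lower B_form by simp
    ultimately obtain c where c: "c > 0" "\<And>x. x \<in> carrier_vec k \<Longrightarrow> c * (x \<bullet> x) \<le> x \<bullet> (B *\<^sub>v x)"
      using psd_nonsingular_coercive[OF B] by metis
    have "m + c \<le> m" unfolding m_def
    proof (rule cInf_greatest[OF R_ne])
      fix r assume "r \<in> R"
      then obtain x where x: "x \<in> carrier_vec k" "x \<noteq> 0\<^sub>v k" "r = x \<bullet> (A *\<^sub>v x) / (x \<bullet> x)"
        unfolding R_def by blast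
      show "Inf R + c \<le> r"
        using c(2)[OF x(1)] B_form[OF x(1)] pos[OF x(1,2)] x(3)
        by (simp add: le_divide_eq algebra_simps m_def)
    qed
    then show False using c(1) by simp
  qed
  then have "eigenvalue A m" unfolding B_def by (simp add: eigenvalue_det[OF A])
  with lower that show thesis by blast
qed

lemma lambda_min_le_rayleigh:
  fixes A :: "real mat"
  assumes A: "A \<in> carrier_mat k k" and sym: "A\<^sup>T = A" and k: "0 < k" and x: "x \<in> carrier_vec k"
  shows "lambda_min A * (x \<bullet> x) \<le> x \<bullet> (A *\<^sub>v x)"
proof -
  obtain m where m: "eigenvalue A m" "\<And>x. x \<in> carrier_vec k \<Longrightarrow> m * (x \<bullet> x) \<le> x \<bullet> (A *\<^sub>v x)"
    using symmetric_mat_eigenvalue_le_rayleigh[OF A sym k] by metis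
  have "char_poly A \<noteq> 0" using degree_monic_char_poly[OF A] by auto
  then have "finite {e. eigenvalue A e}"
    using poly_roots_finite eigenvalue_root_char_poly[OF A] by simp
  then have "lambda_min A \<le> m" unfolding lambda_min_def using m(1) by simp
  then have "lambda_min A * (x \<bullet> x) \<le> m * (x \<bullet> x)"
    by (rule mult_right_mono) (rule scalar_prod_self_nonneg)
  with m(2)[OF x] show ?thesis by linarith
qed

section \<open>Column submatrices\<close>

lemma bij_betw_pick:
  assumes "finite g"
  shows "bij_betw (pick g) {..<card g} g"
proof -
  have inj: "inj_on (pick g) {..<card g}"
    by (rule strict_mono_on_imp_inj_on) (auto simp: strict_mono_on_def intro: pick_mono)
  have sub: "pick g ` {..<card g} \<subseteq> g" using pick_in_set by auto
  have "pick g ` {..<card g} = g"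
    using card_subset_eq[OF assms sub] card_image[OF inj] by simp
  with inj show ?thesis unfolding bij_betw_def by simp
qed

lemma sum_pick:
  assumes "finite g"
  shows "(\<Sum>l<card g. f (pick g l)) = (\<Sum>j\<in>g. f j)"
  using sum.reindex_bij_betw[OF bij_betw_pick[OF assms]] .

lemma Collect_less_mem_eq: "g \<subseteq> {0..<p} \<Longrightarrow> {j. j < p \<and> j \<in> g} = g"
  by auto

lemma colsub_carrier:
  assumes "X \<in> carrier_mat n p" "g \<subseteq> {0..<p}"
  shows "colsub X g \<in> carrier_mat n (card g)"
  using assms Collect_less_mem_eq[OF assms(2)]
  unfolding colsub_def carrier_mat_def by (simp add: dim_submatrix)

lemma colsub_index:
  assumes "X \<in> carrier_mat n p" "g \<subseteq> {0..<p}" "i < n" "l < card g"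
  shows "colsub X g $$ (i, l) = X $$ (i, pick g l)"
  using assms Collect_less_mem_eq[OF assms(2)]
  unfolding colsub_def by (simp add: submatrix_index pick_UNIV)

lemma vsub_carrier:
  assumes "\<theta> \<in> carrier_vec p" "g \<subseteq> {0..<p}"
  shows "vsub \<theta> g \<in> carrier_vec (card g)"
  using assms Collect_less_mem_eq[OF assms(2)] unfolding vsub_def by simp

lemma vsub_index:
  assumes "\<theta> \<in> carrier_vec p" "g \<subseteq> {0..<p}" "l < card g"
  shows "vsub \<theta> g $ l = \<theta> $ pick g l"
  using assms Collect_less_mem_eq[OF assms(2)] unfolding vsub_def by simp

lemma colsub_mult_vsub:
  assumes X: "X \<in> carrier_mat n p" and \<theta>: "\<theta> \<in> carrier_vec p" and g: "g \<subseteq> {0..<p}"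
  shows "colsub X g *\<^sub>v vsub \<theta> g = vec n (\<lambda>i. \<Sum>j\<in>g. X $$ (i, j) * \<theta> $ j)"
proof (rule eq_vecI)
  fix i assume "i < dim_vec (vec n (\<lambda>i. \<Sum>j\<in>g. X $$ (i, j) * \<theta> $ j))"
  then have i: "i < n" by simp
  have "(colsub X g *\<^sub>v vsub \<theta> g) $ i = (\<Sum>l<card g. colsub X g $$ (i, l) * vsub \<theta> g $ l)"
    using colsub_carrier[OF X g] vsub_carrier[OF \<theta> g] i
    by (auto simp: mult_mat_vec_def scalar_prod_def lessThan_atLeast0)
  also have "\<dots> = (\<Sum>l<card g. X $$ (i, pick g l) * \<theta> $ pick g l)"
    using colsub_index[OF X g i] vsub_index[OF \<theta> g] by simp
  also have "\<dots> = (\<Sum>j\<in>g. X $$ (i, j) * \<theta> $ j)"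
    using g by (intro sum_pick) (simp add: finite_subset)
  finally show "(colsub X g *\<^sub>v vsub \<theta> g) $ i = vec n (\<lambda>i. \<Sum>j\<in>g. X $$ (i, j) * \<theta> $ j) $ i"
    using i by simp
qed (use colsub_carrier[OF X g] in simp)

lemma vsub_sq_norm:
  assumes \<theta>: "\<theta> \<in> carrier_vec p" and g: "g \<subseteq> {0..<p}"
  shows "vsub \<theta> g \<bullet> vsub \<theta> g = (\<Sum>j\<in>g. (\<theta> $ j)\<^sup>2)"
proof -
  have "vsub \<theta> g \<bullet> vsub \<theta> g = (\<Sum>l<card g. (\<theta> $ pick g l)\<^sup>2)"
    using vsub_carrier[OF \<theta> g] vsub_index[OF \<theta> g]
    by (auto simp: scalar_prod_def lessThan_atLeast0 power2_eq_square)
  also have "\<dots> = (\<Sum>j\<in>g. (\<theta> $ j)\<^sup>2)"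
    using g by (intro sum_pick) (simp add: finite_subset)
  finally show ?thesis .
qed

definition restrict_vec :: "'a :: zero vec \<Rightarrow> nat set \<Rightarrow> 'a vec" where
  "restrict_vec v D = vec (dim_vec v) (\<lambda>j. if j \<in> D then v $ j else 0)"

lemma sum_restrict_vec:
  fixes f :: "nat \<Rightarrow> 'a :: zero \<Rightarrow> 'b :: comm_monoid_add"
  assumes "\<theta> \<in> carrier_vec p" "D \<subseteq> S" "S \<subseteq> {0..<p}" "\<And>j. f j 0 = 0"
  shows "(\<Sum>j\<in>S. f j (restrict_vec \<theta> D $ j)) = (\<Sum>j\<in>D. f j (\<theta> $ j))"
proof -
  have "(\<Sum>j\<in>S. f j (restrict_vec \<theta> D $ j)) = (\<Sum>j\<in>S. if j \<in> D then f j (\<theta> $ j) else 0)"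
    using assms by (intro sum.cong) (auto simp: restrict_vec_def)
  also have "\<dots> = (\<Sum>j\<in>D. f j (\<theta> $ j))"
    using assms(2,3) by (simp add: sum.inter_restrict[symmetric] finite_subset Int_absorb1)
  finally show ?thesis .
qed

lemma colsub_mult_vsub_restrict:
  assumes X: "X \<in> carrier_mat n p" and \<theta>: "\<theta> \<in> carrier_vec p"
    and D: "D \<subseteq> S" and S: "S \<subseteq> {0..<p}"
  shows "colsub X S *\<^sub>v vsub (restrict_vec \<theta> D) S = colsub X D *\<^sub>v vsub \<theta> D"
proof -
  have \<theta>': "restrict_vec \<theta> D \<in> carrier_vec p" using \<theta> by (simp add: restrict_vec_def)
  have "(\<Sum>j\<in>S. X $$ (i, j) * restrict_vec \<theta> D $ j) = (\<Sum>j\<in>D. X $$ (i, j) * \<theta> $ j)" for i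
    using sum_restrict_vec[OF \<theta> D S, of "\<lambda>j t. X $$ (i, j) * t"] by simp
  then show ?thesis
    unfolding colsub_mult_vsub[OF X \<theta>' S] colsub_mult_vsub[OF X \<theta> order.trans[OF D S]] by simp
qed

lemma vsub_restrict_sq_norm:
  assumes \<theta>: "\<theta> \<in> carrier_vec p" and D: "D \<subseteq> S" and S: "S \<subseteq> {0..<p}"
  shows "vsub (restrict_vec \<theta> D) S \<bullet> vsub (restrict_vec \<theta> D) S = (\<Sum>j\<in>D. (\<theta> $ j)\<^sup>2)"
proof -
  have \<theta>': "restrict_vec \<theta> D \<in> carrier_vec p" using \<theta> by (simp add: restrict_vec_def)
  show ?thesis
    unfolding vsub_sq_norm[OF \<theta>' S] using sum_restrict_vec[OF \<theta> D S, of "\<lambda>_ t. t\<^sup>2"] by simp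
qed

section \<open>Least-squares projections\<close>

lemma (in vec_space) full_rank_mult_vec_eq_0D:
  assumes A: "A \<in> carrier_mat n k" and rank: "rank A = k"
    and v: "v \<in> carrier_vec k" and Av: "A *\<^sub>v v = 0\<^sub>v n"
  shows "v = 0\<^sub>v k"
proof (cases "distinct (cols A)")
  case True
  then have "lin_indpt (set (cols A))" using full_rank_lin_indpt[OF A rank] by blast
  then show ?thesis using lin_depI[OF A v _ Av True] by blast
next
  case False
  obtain S where S: "maximal S (\<lambda>T. T \<subseteq> set (cols A) \<and> lin_indpt T)"
    using maximal_exists[of "\<lambda>T. T \<subseteq> set (cols A) \<and> lin_indpt T" "card (set (cols A))" "{}"]
    by (meson List.finite_set card_mono empty_iff empty_subsetI finite_lin_indpt2 rev_finite_subset)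
  then have "card S \<le> card (set (cols A))" by (simp add: card_mono maximal_def)
  also have "card (set (cols A)) < k"
    using False card_distinct[of "cols A"] card_length[of "cols A"] A by (auto simp: le_less)
  finally show ?thesis using rank_card_indpt[OF A S] rank by simp
qed

lemma gram_det_nonzero:
  fixes A :: "real mat"
  assumes A: "A \<in> carrier_mat n k" and rank: "vec_space.rank n A = k"
  shows "det (A\<^sup>T * A) \<noteq> 0"
proof
  assume "det (A\<^sup>T * A) = 0"
  then obtain v where v: "v \<in> carrier_vec k" "v \<noteq> 0\<^sub>v k" "(A\<^sup>T * A) *\<^sub>v v = 0\<^sub>v k"
    using det_0_iff_vec_prod_zero_field[of "A\<^sup>T * A" k] A by auto
  have "(A *\<^sub>v v) \<bullet> (A *\<^sub>v v) = v \<bullet> ((A\<^sup>T * 1\<^sub>m n * A) *\<^sub>v v)"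
    using quadratic_form_congruence[OF A _ v(1), of "1\<^sub>m n"] A v(1) by simp
  also have "\<dots> = 0" using A v by simp
  finally have "A *\<^sub>v v = 0\<^sub>v n" using scalar_prod_self_eq_0_iff[of "A *\<^sub>v v" n] A v(1) by simp
  then show False using vec_space.full_rank_mult_vec_eq_0D[OF A rank v(1)] v(2) by simp
qed

lemma inverse_symmetric_mat:
  fixes G :: "'a :: comm_ring_1 mat"
  assumes G: "G \<in> carrier_mat k k" "G\<^sup>T = G"
    and Gi: "Gi \<in> carrier_mat k k" "G * Gi = 1\<^sub>m k" "Gi * G = 1\<^sub>m k"
  shows "Gi\<^sup>T = Gi"
proof -
  have "Gi\<^sup>T = Gi\<^sup>T * (G * Gi)"
    using Gi by simp
  also have "\<dots> = (Gi\<^sup>T * G) * Gi"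
    using assoc_mult_mat[of "Gi\<^sup>T" k k G k Gi k] G Gi by simp
  also have "Gi\<^sup>T * G = 1\<^sub>m k"
    using transpose_mult[of G k k Gi k] G Gi by simp
  finally show ?thesis using Gi by simp
qed

lemma proj_eq_gram_inverse:
  assumes X: "X \<in> carrier_mat n p" and g: "g \<subseteq> {0..<p}" and rank: "full_col_rank X g"
  obtains Gi where "proj X g = colsub X g * Gi * (colsub X g)\<^sup>T"
    "Gi \<in> carrier_mat (card g) (card g)" "Gi\<^sup>T = Gi"
    "(colsub X g)\<^sup>T * colsub X g * Gi = 1\<^sub>m (card g)"
proof -
  let ?A = "colsub X g" and ?k = "card g"
  have A: "?A \<in> carrier_mat n ?k" by (rule colsub_carrier[OF X g])
  have G: "?A\<^sup>T * ?A \<in> carrier_mat ?k ?k" using A by simp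
  have "(?A\<^sup>T * ?A)\<^sup>T = ?A\<^sup>T * ?A" using transpose_mult[of "?A\<^sup>T" ?k n ?A ?k] A by simp
  moreover have "det (?A\<^sup>T * ?A) \<noteq> 0"
    using gram_det_nonzero[OF A] rank A X unfolding full_col_rank_def by simp
  ultimately obtain Gi where Gi: "mat_inverse (?A\<^sup>T * ?A) = Some Gi"
    "?A\<^sup>T * ?A * Gi = 1\<^sub>m ?k" "Gi \<in> carrier_mat ?k ?k" "Gi\<^sup>T = Gi"
    using mat_inverse_nonsingular[OF G] inverse_symmetric_mat[OF G] by metis
  moreover have "proj X g = ?A * Gi * ?A\<^sup>T" unfolding proj_def Let_def Gi(1) by simp
  ultimately show thesis using that by blast
qed

lemma proj_symmetric_idempotent:
  assumes X: "X \<in> carrier_mat n p" and g: "g \<subseteq> {0..<p}" and rank: "full_col_rank X g"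
  shows "proj X g \<in> carrier_mat n n" "(proj X g)\<^sup>T = proj X g" "proj X g * proj X g = proj X g"
proof -
  let ?A = "colsub X g" and ?k = "card g"
  obtain Gi where P: "proj X g = ?A * Gi * ?A\<^sup>T" and Gi: "Gi \<in> carrier_mat ?k ?k" "Gi\<^sup>T = Gi"
    and inv: "?A\<^sup>T * ?A * Gi = 1\<^sub>m ?k"
    using proj_eq_gram_inverse[OF X g rank] by metis
  have A: "?A \<in> carrier_mat n ?k" by (rule colsub_carrier[OF X g])
  show P_carrier: "proj X g \<in> carrier_mat n n" unfolding P using A Gi by simp
  show "(proj X g)\<^sup>T = proj X g"
    unfolding P using transpose_congruence[of "?A\<^sup>T" ?k n Gi] A Gi by simp
  have fix_cols: "?A\<^sup>T * proj X g = ?A\<^sup>T"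
  proof -
    have "?A\<^sup>T * proj X g = ?A\<^sup>T * (?A * Gi) * ?A\<^sup>T"
      unfolding P by (rule assoc_mult_mat[symmetric]) (use A Gi in auto)
    also have "?A\<^sup>T * (?A * Gi) = 1\<^sub>m ?k"
      unfolding inv[symmetric] by (rule assoc_mult_mat[symmetric]) (use A Gi in auto)
    finally show ?thesis using A by simp
  qed
  have "proj X g * proj X g = ?A * Gi * (?A\<^sup>T * proj X g)"
    by (subst (1) P, rule assoc_mult_mat) (use P_carrier A Gi in auto)
  also have "\<dots> = proj X g" unfolding fix_cols by (rule P[symmetric])
  finally show "proj X g * proj X g = proj X g" .
qed

lemma residual_sq_norm:
  fixes P :: "real mat"
  assumes P: "P \<in> carrier_mat n n" "P\<^sup>T = P" "P * P = P" and y: "y \<in> carrier_vec n"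
  shows "((1\<^sub>m n - P) *\<^sub>v y) \<bullet> ((1\<^sub>m n - P) *\<^sub>v y) = y \<bullet> ((1\<^sub>m n - P) *\<^sub>v y)"
proof -
  have Py: "P *\<^sub>v y \<in> carrier_vec n" using P y by simp
  have "(P *\<^sub>v y) \<bullet> (P *\<^sub>v y) = y \<bullet> ((P\<^sup>T * 1\<^sub>m n * P) *\<^sub>v y)"
    using quadratic_form_congruence[OF P(1) _ y, of "1\<^sub>m n"] Py by simp
  also have "\<dots> = y \<bullet> (P *\<^sub>v y)" using P by simp
  finally have PyPy: "(P *\<^sub>v y) \<bullet> (P *\<^sub>v y) = y \<bullet> (P *\<^sub>v y)" .
  have "(1\<^sub>m n - P) *\<^sub>v y = y - P *\<^sub>v y"
    using P y by (simp add: minus_mult_distrib_mat_vec[of _ n n])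
  then show ?thesis
    using y Py PyPy
    by (simp add: minus_scalar_prod_distrib[of _ n] scalar_prod_minus_distrib[of _ n]
        comm_scalar_prod[of "P *\<^sub>v y" n y])
qed

section \<open>The residual Gram matrix\<close>

definition resid_gram :: "real mat \<Rightarrow> nat set \<Rightarrow> nat set \<Rightarrow> real mat" where
  "resid_gram X g S = (1 / real (dim_row X)) \<cdot>\<^sub>m
     ((colsub X S)\<^sup>T * (1\<^sub>m (dim_row X) - proj X g) * colsub X S)"

lemma rho_le_lambda_min_resid_gram:
  assumes M: "\<forall>g\<in>M. g \<subseteq> {0..<p}" and g: "g \<in> M" "\<not> supp \<theta> \<subseteq> g"
  shows "rho X \<theta> M \<le> lambda_min (resid_gram X g (supp \<theta> - g))"
proof -
  let ?f = "\<lambda>g. lambda_min (resid_gram X g (supp \<theta> - g))"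
  have "finite M" using M by (intro finite_subset[of M "Pow {0..<p}"]) auto
  then have "Min (?f ` {g \<in> M. \<not> supp \<theta> \<subseteq> g}) \<le> ?f g"
    using g by (intro Min_le) auto
  moreover have "rho X \<theta> M = Min (?f ` {g \<in> M. \<not> supp \<theta> \<subseteq> g})"
    unfolding rho_def resid_gram_def by (rule arg_cong[where f = Min]) blast
  ultimately show ?thesis by simp
qed

context
  fixes X :: "real mat" and n p :: nat and g :: "nat set"
  assumes X: "X \<in> carrier_mat n p" and g: "g \<subseteq> {0..<p}" and rank: "full_col_rank X g"
begin

lemma resid_gram_carrier_symmetric:
  assumes S: "S \<subseteq> {0..<p}"
  shows "resid_gram X g S \<in> carrier_mat (card S) (card S)" "(resid_gram X g S)\<^sup>T = resid_gram X g S"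
proof -
  note P = proj_symmetric_idempotent[OF X g rank]
  have A: "colsub X S \<in> carrier_mat n (card S)" by (rule colsub_carrier[OF X S])
  have Q: "1\<^sub>m n - proj X g \<in> carrier_mat n n" "(1\<^sub>m n - proj X g)\<^sup>T = 1\<^sub>m n - proj X g"
    using P by (auto simp: minus_carrier_mat transpose_minus[of _ n n])
  show "resid_gram X g S \<in> carrier_mat (card S) (card S)"
    unfolding resid_gram_def using A Q X by simp
  show "(resid_gram X g S)\<^sup>T = resid_gram X g S"
    unfolding resid_gram_def transpose_smult_mat using transpose_congruence[OF A Q] X by simp
qed

lemma resid_gram_quadratic_form:
  assumes n: "0 < n" and S: "S \<subseteq> {0..<p}" and v: "v \<in> carrier_vec (card S)"
  shows "real n * (v \<bullet> (resid_gram X g S *\<^sub>v v)) =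
    sqnorm ((1\<^sub>m n - proj X g) *\<^sub>v (colsub X S *\<^sub>v v))"
proof -
  note P = proj_symmetric_idempotent[OF X g rank]
  let ?A = "colsub X S" and ?Q = "1\<^sub>m n - proj X g"
  have A: "?A \<in> carrier_mat n (card S)" by (rule colsub_carrier[OF X S])
  have Q: "?Q \<in> carrier_mat n n" using P(1) by (rule minus_carrier_mat)
  have "real n * (v \<bullet> (resid_gram X g S *\<^sub>v v)) = v \<bullet> ((?A\<^sup>T * ?Q * ?A) *\<^sub>v v)"
    unfolding resid_gram_def using A Q v X n
    by (simp add: smult_mat_mult_vec[of _ "card S" "card S"] scalar_prod_smult_distrib[of _ "card S"])
  also have "\<dots> = (?A *\<^sub>v v) \<bullet> (?Q *\<^sub>v (?A *\<^sub>v v))"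
    by (rule quadratic_form_congruence[OF A Q v])
  also have "\<dots> = sqnorm (?Q *\<^sub>v (?A *\<^sub>v v))"
    unfolding sqnorm_def using residual_sq_norm[OF P, of "?A *\<^sub>v v"] A v by simp
  finally show ?thesis .
qed

end

lemma mu_eq_resid_gram_form:
  assumes X: "X \<in> carrier_mat n p" and \<theta>: "\<theta> \<in> carrier_vec p" and n: "0 < n"
    and g: "g \<subseteq> {0..<p}" "full_col_rank X g" and S: "h - g \<subseteq> S" "S \<subseteq> {0..<p}"
  defines "v \<equiv> vsub (restrict_vec \<theta> (h - g)) S"
  shows "mu X \<theta> \<phi> h g = real n / \<phi> * (v \<bullet> (resid_gram X g S *\<^sub>v v))"
proof -
  have v: "v \<in> carrier_vec (card S)"
    unfolding v_def using \<theta> S(2) by (intro vsub_carrier) (auto simp: restrict_vec_def)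
  have "mu X \<theta> \<phi> h g = 1 / \<phi> * sqnorm ((1\<^sub>m n - proj X g) *\<^sub>v (colsub X S *\<^sub>v v))"
    unfolding mu_def v_def colsub_mult_vsub_restrict[OF X \<theta> S] using X by simp
  also have "\<dots> = real n / \<phi> * (v \<bullet> (resid_gram X g S *\<^sub>v v))"
    unfolding resid_gram_quadratic_form[OF X g n S(2) v, symmetric] by simp
  finally show ?thesis .
qed

lemma mu_nonneg: "0 < \<phi> \<Longrightarrow> 0 \<le> mu X \<theta> \<phi> h g"
  unfolding mu_def sqnorm_def using scalar_prod_self_nonneg by simp

lemma mu_ge_rho_mult:
  assumes X: "X \<in> carrier_mat n p" and \<theta>: "\<theta> \<in> carrier_vec p" and \<phi>: "0 < \<phi>"
    and M: "\<forall>g\<in>M. g \<subseteq> {0..<p} \<and> full_col_rank X g" and g: "g \<in> M"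
    and D: "h - g \<subseteq> supp \<theta>" "h - g \<noteq> {}"
    and t: "0 \<le> t" "t \<le> (\<Sum>j\<in>h - g. (\<theta> $ j)\<^sup>2)"
  shows "real n / \<phi> * rho X \<theta> M * t \<le> mu X \<theta> \<phi> h g"
proof -
  define S where "S = supp \<theta> - g"
  define A where "A = resid_gram X g S"
  define v where "v = vsub (restrict_vec \<theta> (h - g)) S"
  have g': "g \<subseteq> {0..<p}" "full_col_rank X g" using M g by auto
  have S: "h - g \<subseteq> S" "S \<subseteq> {0..<p}" "0 < card S"
    using \<theta> D unfolding S_def supp_def by (auto simp: card_gt_0_iff finite_subset)
  have v: "v \<in> carrier_vec (card S)"
    unfolding v_def using \<theta> S(2) by (intro vsub_carrier) (auto simp: restrict_vec_def)
  have rho: "rho X \<theta> M \<le> lambda_min A"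
    unfolding A_def S_def using M g D by (intro rho_le_lambda_min_resid_gram) auto
  have rayleigh: "lambda_min A * (v \<bullet> v) \<le> v \<bullet> (A *\<^sub>v v)"
    unfolding A_def using resid_gram_carrier_symmetric[OF X g' S(2)] S(3) v
    by (intro lambda_min_le_rayleigh) auto
  show ?thesis
  proof (cases "n = 0 \<or> rho X \<theta> M \<le> 0")
    case True
    then have "real n / \<phi> * rho X \<theta> M \<le> 0"
      using \<phi> by (cases "n = 0") (auto intro!: mult_nonneg_nonpos simp del: times_divide_eq_left)
    with t(1) mu_nonneg[OF \<phi>] show ?thesis by (meson mult_nonpos_nonneg order_trans)
  next
    case False
    then have n: "0 < n" and "0 < rho X \<theta> M" by auto
    have "rho X \<theta> M * t \<le> lambda_min A * (v \<bullet> v)"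
      unfolding v_def vsub_restrict_sq_norm[OF \<theta> S(1,2)]
      using rho t \<open>0 < rho X \<theta> M\<close> by (intro mult_mono) auto
    then have "real n / \<phi> * rho X \<theta> M * t \<le> real n / \<phi> * (lambda_min A * (v \<bullet> v))"
      using \<phi> unfolding mult.assoc by (intro mult_left_mono) auto
    also have "\<dots> \<le> real n / \<phi> * (v \<bullet> (A *\<^sub>v v))"
      using rayleigh \<phi> by (intro mult_left_mono) auto
    also have "\<dots> = mu X \<theta> \<phi> h g"
      unfolding A_def v_def using mu_eq_resid_gram_form[OF X \<theta> n g' S(1,2)] by simp
    finally show ?thesis .
  qed
qed

section \<open>Block sums\<close>

lemma blk_diff: "blk z A b - blk z A' b = blk z (A - A') b"
  unfolding blk_def by auto

definition card_Min :: "('a \<Rightarrow> real) \<Rightarrow> 'a set \<Rightarrow> real" where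
  "card_Min f E = (if E = {} then 0 else real (card E) * Min (f ` E))"

lemma card_Min_le_sum: "finite E \<Longrightarrow> card_Min f E \<le> sum f E"
  unfolding card_Min_def by (auto intro: sum_bounded_below)

lemma card_Min_nonneg: "(\<And>x. 0 \<le> f x) \<Longrightarrow> 0 \<le> card_Min f E"
  unfolding card_Min_def by (cases "finite E") auto

lemma sum_blk_card_Min_le_sum:
  assumes D: "finite D" and z: "\<forall>j\<in>D. z j \<in> {1..B}"
  shows "(\<Sum>b = 1..B. card_Min f (blk z D b)) \<le> sum f D"
proof -
  have "(\<Sum>b = 1..B. card_Min f (blk z D b)) \<le> (\<Sum>b = 1..B. sum f (blk z D b))"
    using D by (intro sum_mono card_Min_le_sum) (simp add: blk_def)
  also have "\<dots> = sum f D"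
    unfolding blk_def by (rule sum.group[OF D]) (use z in auto)
  finally show ?thesis .
qed

theorem lemma2:
  fixes X :: "real mat" and \<theta> :: "real vec" and \<phi> :: real
    and n p B :: nat and z :: "nat \<Rightarrow> nat"
    and M :: "nat set set" and \<gamma> \<gamma>t :: "nat set"
  assumes "X \<in> carrier_mat n p"
    and "\<theta> \<in> carrier_vec p"
    and "\<phi> > 0"
    and "\<forall>j<p. z j \<in> {1..B}"
    and "\<forall>g\<in>M. g \<subseteq> {0..<p} \<and> full_col_rank X g"
    and "\<gamma> \<in> M"
    and "\<gamma>t \<subseteq> supp \<theta>"
    and "\<not> \<gamma>t \<subseteq> \<gamma>"
  shows "mu X \<theta> \<phi> (\<gamma> \<union> \<gamma>t) \<gamma> \<ge>
    real n / \<phi> * rho X \<theta> M *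
    (\<Sum>b = 1..B. (let D = blk z \<gamma>t b - blk z \<gamma> b in
        if D = {} then 0 else real (card D) * Min ((\<lambda>i. (\<theta> $ i)\<^sup>2) ` D)))"
proof -
  have D: "(\<gamma> \<union> \<gamma>t) - \<gamma> = \<gamma>t - \<gamma>" by blast
  have supp: "supp \<theta> \<subseteq> {0..<p}" using assms(2) by (auto simp: supp_def)
  then have "finite (\<gamma>t - \<gamma>)" using assms(7) by (auto intro: finite_subset)
  show ?thesis
    unfolding blk_diff card_Min_def[symmetric] Let_def
  proof (rule mu_ge_rho_mult[OF assms(1-3,5,6)], unfold D)
    show "\<gamma>t - \<gamma> \<subseteq> supp \<theta>" "\<gamma>t - \<gamma> \<noteq> {}" using assms(7,8) by auto
    show "0 \<le> (\<Sum>b = 1..B. card_Min (\<lambda>i. (\<theta> $ i)\<^sup>2) (blk z (\<gamma>t - \<gamma>) b))"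
      by (intro sum_nonneg card_Min_nonneg) simp
    show "(\<Sum>b = 1..B. card_Min (\<lambda>i. (\<theta> $ i)\<^sup>2) (blk z (\<gamma>t - \<gamma>) b)) \<le> (\<Sum>j\<in>\<gamma>t - \<gamma>. (\<theta> $ j)\<^sup>2)"
      by (rule sum_blk_card_Min_le_sum[OF \<open>finite (\<gamma>t - \<gamma>)\<close>]) (use assms(4,7) supp in auto)
  qed
qed

end
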